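(* Let $2\le n\le N$ and $k\ge0$, and assume that the property $(\mathbf{SS}.N.I.k.\tilde n)$ holds for all $\tilde n\in[1,n-1]$. Then for every partially interactive $n$-particle cube $\Lambda^{(n)}_{L_{k+1}}(\mathbf u)$, $$\mathbb P\Big\{\Lambda^{(n)}_{L_{k+1}}(\mathbf u)\text{ is }(\tfrac12,I)\text{-PT}\Big\}\le 3^{2(n-1)d}L_{k+1}^{-\frac{p^{(n-1)}}2+2(n-1)d}.$$
   Context: Setting. Fix $N\ge2$, $d\ge1$, $r>0$, $g\ne0$. For $1\le m\le N$, points of $\mathbb Z^{md}$ are $\mathbf x=(x_1,\dots,x_m)$, $x_j\in\mathbb Z^d$, with $\|x_j\|=\max_i|x_j^{(i)}|$, $\|\mathbf x\|=\max_j\|x_j\|$, $\langle\mathbf x\rangle=\max\{1,\|\mathbf x\|\}$. The random $m$-particle operator is $\mathbf H^{(m)}_\omega=\frac1g(\mathbf T+\mathbf U)+\mathbf V(\cdot,\omega)$: $\mathbf T(\mathbf x,\mathbf y)=\langle y_j-x_j\rangle^{-r}$ if there is $j$ with $x_i=y_i$ for all $i\ne j$, else $0$; $\mathbf U(\mathbf x)=\sum_{j_1<j_2}U(x_{j_1},x_{j_2})$ with $U$ symmetric, $|U|\le M_1$, $U(x,x')=0$ if $\|x-x'\|\ge\mathrm r_0$ ($\mathrm r_0\ge1$); $\mathbf V(\mathbf x,\omega)=\sum_jV(x_j,\omega)$ with $V(x,\omega)$, $x\in\mathbb Z^d$, i.i.d. with distribution $\mu$ supported in $[-M,M]$ and Hölder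 continuous of order $\rho>0$. Cubes $\Lambda^{(m)}_L(\mathbf u)=\{\mathbf x:\|\mathbf x-\mathbf u\|\le L\}$; $\mathbf H^{(m)}_\Lambda$ is the restriction to $\Lambda$, $\mathbf G^{(m)}_\Lambda(E)=(\mathbf H^{(m)}_\Lambda-E)^{-1}$. Projections $\Pi_j\mathbf x=x_j$, $\Pi_J\Lambda=\bigcup_{j\in J}\Pi_j\Lambda$, $\Pi\Lambda=\Pi_{\{1,\dots,m\}}\Lambda$. Separability: $\Lambda^{(m)}_L(\mathbf u),\Lambda^{(m)}_L(\mathbf v)$ are weakly separable if for some nonempty $J\subseteq\{1,\dots,m\}$ either $\Pi_J\Lambda^{(m)}_{L+\mathrm r_0}(\mathbf u)\cap(\Pi_{J^C}\Lambda^{(m)}_{L+\mathrm r_0}(\mathbf u)\cup\Pi\Lambda^{(m)}_{L+\mathrm r_0}(\mathbf v))=\emptyset$ or the same with $\mathbf u,\mathbf v$ swapped; separable if in addition $\|\mathbf u-\mathbf v\|>11mL$. PI/FI: $\Lambda^{(n)}_L(\mathbf u)$ is fully interactive if $\min_{x\in\mathbb Z^d}\max_j\|u_j-x\|\le2n(L+\mathrm r_0)$ and partially interactive (PI) otherwise. For a PI cube there is a nonempty proper $J$ with $\Pi_J\Lambda^{(n)}_{L+\mathrm r_0}(\mathbf u)\cap\Pi_{J^C}\Lambda^{(n)}_{L+\mathrm r_0}(\mathbf u)=\emptyset$, giving the canonical decomposition $\Lambda^{(n)}_L(\mathbf u)=\Lambda^{(n')}_L(\mathbf u')\times\Lambda^{(n'')}_L(\mathbf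 u'')$, $n'=|J|$, $\mathbf u'=(u_j)_{j\in J}$, $\mathbf u''=(u_j)_{j\in J^C}$. Sobolev norm of a matrix $\mathcal M$ on $X\times Y$: $\|\mathcal M\|_s^2=C_0\sum_{\mathbf v\in X-Y}(\sup_{\mathbf x-\mathbf y=\mathbf v}|\mathcal M(\mathbf x,\mathbf y)|)^2\langle\mathbf v\rangle^{2s}$, $C_0=C_0(s_0^{(m)})>0$ fixed. With parameters $\tau_m\ge0$, $md/2<s_0^{(m)}\le r_m<r-md/2$, an $m$-particle cube $\Lambda^{(m)}_L(\mathbf u)$ is $(E,\tfrac12)$-NS if $\mathbf G^{(m)}_{\Lambda^{(m)}_L(\mathbf u)}(E)$ exists and $\|\mathbf G^{(m)}_{\Lambda^{(m)}_L(\mathbf u)}(E)\|_s\le L^{\tau_m+s/2}$ for all $s\in[s_0^{(m)},r_m]$, and $(E,\tfrac12)$-S otherwise. Parameters: $I=[-MN-1,MN+1]$, $p^{(m)}=18^{N-m}p_0$ with $p_0\ge20Nd$, $L_k=L_0^{4^k}$. Property $(\mathbf{SS}.N.I.k.m)$: for every pair of separable $m$-particle cubes $\Lambda^{(m)}_{L_k}(\mathbf x),\Lambda^{(m)}_{L_k}(\mathbf y)$, $\mathbb P\{\exists E\in I:\text{both }(E,\tfrac12)\text{-S}\}<L_k^{-2p^{(m)}}$. Tunneling: an $m$-particle cube $\Lambda^{(m)}_{L_{k+1}}(\mathbf u)$ is $(\tfrac12,I)$-tunneling if there exist $E\in I$ and two separable $(E,\tfrac12)$-S cubes $\Lambda^{(m)}_{L_k}(\mathbf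 x),\Lambda^{(m)}_{L_k}(\mathbf y)\subset\Lambda^{(m)}_{L_{k+1}}(\mathbf u)$. A PI cube $\Lambda^{(n)}_{L_{k+1}}(\mathbf u)$ with canonical decomposition $\Lambda^{(n')}_{L_{k+1}}(\mathbf u')\times\Lambda^{(n'')}_{L_{k+1}}(\mathbf u'')$ is $(\tfrac12,I)$-partially tunneling ($(\tfrac12,I)$-PT) if at least one of $\Lambda^{(n')}_{L_{k+1}}(\mathbf u')$, $\Lambda^{(n'')}_{L_{k+1}}(\mathbf u'')$ is $(\tfrac12,I)$-tunneling. *)

theory Defs
  imports "HOL-Probability.Probability"
begin

text \<open>Single-particle sites are points of \<open>\<int>^d\<close>, rendered as \<open>int^'d\<close> with \<open>d = CARD('d)\<close>.
  An m-particle configuration is a list of m sites (particle j is the j-th entry, 0-based).\<close>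

type_synonym 'd site = "int^'d"
type_synonym 'd conf = "'d site list"

definition snorm :: "'d::finite site \<Rightarrow> real" where
  "snorm v = real_of_int (Max (range (\<lambda>i. \<bar>v$i\<bar>)))"

definition sbr :: "'d::finite site \<Rightarrow> real" where
  "sbr v = max 1 (snorm v)"

definition cdiff :: "'d::finite conf \<Rightarrow> 'd conf \<Rightarrow> 'd conf" where
  "cdiff x y = map2 (-) x y"

definition cnorm :: "'d::finite conf \<Rightarrow> real" where
  "cnorm x = Max (insert 0 (set (map snorm x)))"

definition cbr :: "'d::finite conf \<Rightarrow> real" where
  "cbr x = max 1 (cnorm x)"

definition cube :: "nat \<Rightarrow> real \<Rightarrow> 'd::finite conf \<Rightarrow> 'd conf set" where
  "cube m L u = {x. length x = m \<and> cnorm (cdiff x u) \<le> L}"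

definition proj :: "nat set \<Rightarrow> 'd conf set \<Rightarrow> 'd site set" where
  "proj J A = (\<Union>j\<in>J. (\<lambda>x. x ! j) ` A)"

definition weakly_separable :: "real \<Rightarrow> nat \<Rightarrow> real \<Rightarrow> 'd::finite conf \<Rightarrow> 'd conf \<Rightarrow> bool" where
  "weakly_separable r0 m L u v =
     (\<exists>J. J \<noteq> {} \<and> J \<subseteq> {0..<m} \<and>
        (proj J (cube m (L + r0) u) \<inter>
           (proj ({0..<m} - J) (cube m (L + r0) u) \<union> proj {0..<m} (cube m (L + r0) v)) = {}
         \<or> proj J (cube m (L + r0) v) \<inter>
           (proj ({0..<m} - J) (cube m (L + r0) v) \<union> proj {0..<m} (cube m (L + r0) u)) = {}))"

definition separable :: "real \<Rightarrow> nat \<Rightarrow> real \<Rightarrow> 'd::finite conf \<Rightarrow> 'd conf \<Rightarrow> bool" where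
  "separable r0 m L u v = (weakly_separable r0 m L u v \<and> cnorm (cdiff u v) > 11 * real m * L)"

definition fully_interactive :: "real \<Rightarrow> nat \<Rightarrow> real \<Rightarrow> 'd::finite conf \<Rightarrow> bool" where
  "fully_interactive r0 n L u =
     (\<exists>x::'d site. Max ((\<lambda>j. snorm (u ! j - x)) ` {0..<n}) \<le> 2 * real n * (L + r0))"

definition partially_interactive :: "real \<Rightarrow> nat \<Rightarrow> real \<Rightarrow> 'd::finite conf \<Rightarrow> bool" where
  "partially_interactive r0 n L u = (\<not> fully_interactive r0 n L u)"

text \<open>Kinetic term \<open>T\<close>: if x and y differ in at most one particle j, the value is
  \<open>\<langle>y_j - x_j\<rangle>^{-r}\<close> (the maximum below equals that bracket, and equals 1 when x = y).\<close>
definition Tkin :: "real \<Rightarrow> 'd::finite conf \<Rightarrow> 'd conf \<Rightarrow> real" where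
  "Tkin r x y =
     (if \<exists>j<length x. \<forall>i<length x. i \<noteq> j \<longrightarrow> x ! i = y ! i
      then (Max ((\<lambda>j. sbr (y ! j - x ! j)) ` {0..<length x})) powr (- r)
      else 0)"

definition Uint :: "('d site \<Rightarrow> 'd site \<Rightarrow> real) \<Rightarrow> 'd conf \<Rightarrow> real" where
  "Uint U x = (\<Sum>j2<length x. \<Sum>j1<j2. U (x ! j1) (x ! j2))"

definition Vpot :: "('d site \<Rightarrow> 'w \<Rightarrow> real) \<Rightarrow> 'd conf \<Rightarrow> 'w \<Rightarrow> real" where
  "Vpot V x \<omega> = (\<Sum>j<length x. V (x ! j) \<omega>)"

text \<open>Matrix entries of \<open>H = (1/g)(T + U) + V\<close> (restricted to a cube by restricting indices).\<close>
definition Hop :: "real \<Rightarrow> real \<Rightarrow> ('d::finite site \<Rightarrow> 'd site \<Rightarrow> real) \<Rightarrow> ('d site \<Rightarrow> 'w \<Rightarrow> real)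
                   \<Rightarrow> 'w \<Rightarrow> 'd conf \<Rightarrow> 'd conf \<Rightarrow> real" where
  "Hop g r U V \<omega> x y =
     (Tkin r x y + (if x = y then Uint U x else 0)) / g + (if x = y then Vpot V x \<omega> else 0)"

definition is_inverse_on :: "'a set \<Rightarrow> ('a \<Rightarrow> 'a \<Rightarrow> real) \<Rightarrow> ('a \<Rightarrow> 'a \<Rightarrow> real) \<Rightarrow> bool" where
  "is_inverse_on \<Lambda> A G =
     (\<forall>x\<in>\<Lambda>. \<forall>y\<in>\<Lambda>. (\<Sum>z\<in>\<Lambda>. A x z * G z y) = (if x = y then 1 else 0)
                    \<and> (\<Sum>z\<in>\<Lambda>. G x z * A z y) = (if x = y then 1 else 0))"

definition sobolev :: "real \<Rightarrow> 'd::finite conf set \<Rightarrow> ('d conf \<Rightarrow> 'd conf \<Rightarrow> real) \<Rightarrow> real \<Rightarrow> real" where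
  "sobolev C0 \<Lambda> G s =
     sqrt (C0 * (\<Sum>v \<in> (\<lambda>(x, y). cdiff x y) ` (\<Lambda> \<times> \<Lambda>).
        (Max {\<bar>G x y\<bar> | x y. x \<in> \<Lambda> \<and> y \<in> \<Lambda> \<and> cdiff x y = v})\<^sup>2 * cbr v powr (2 * s)))"

definition NS :: "real \<Rightarrow> real \<Rightarrow> ('d::finite site \<Rightarrow> 'd site \<Rightarrow> real) \<Rightarrow> ('d site \<Rightarrow> 'w \<Rightarrow> real)
        \<Rightarrow> (nat \<Rightarrow> real) \<Rightarrow> (nat \<Rightarrow> real) \<Rightarrow> (nat \<Rightarrow> real) \<Rightarrow> (nat \<Rightarrow> real)
        \<Rightarrow> nat \<Rightarrow> real \<Rightarrow> 'd conf \<Rightarrow> real \<Rightarrow> 'w \<Rightarrow> bool" where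
  "NS g r U V C0 tau s0 rr m L u E \<omega> =
     (\<exists>G. is_inverse_on (cube m L u) (\<lambda>x y. Hop g r U V \<omega> x y - (if x = y then E else 0)) G
        \<and> (\<forall>s. s0 m \<le> s \<and> s \<le> rr m \<longrightarrow>
               sobolev (C0 m) (cube m L u) G s \<le> L powr (tau m + s / 2)))"

definition Lk :: "nat \<Rightarrow> nat \<Rightarrow> real" where
  "Lk L0 k = real L0 ^ (4 ^ k)"

definition pexp :: "nat \<Rightarrow> real \<Rightarrow> nat \<Rightarrow> real" where
  "pexp N p0 m = 18 ^ (N - m) * p0"

definition Ienergy :: "nat \<Rightarrow> real \<Rightarrow> real set" where
  "Ienergy N M = {- M * real N - 1 .. M * real N + 1}"

text \<open>Outer probability (coincides with \<open>measure P A\<close> for events \<open>A\<close>).\<close>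
definition oprob :: "'w measure \<Rightarrow> 'w set \<Rightarrow> real" where
  "oprob P A = Inf {measure P B | B. B \<in> sets P \<and> A \<subseteq> B}"

definition SSprop :: "'w measure \<Rightarrow> real \<Rightarrow> real \<Rightarrow> real \<Rightarrow> ('d::finite site \<Rightarrow> 'd site \<Rightarrow> real)
        \<Rightarrow> ('d site \<Rightarrow> 'w \<Rightarrow> real) \<Rightarrow> (nat \<Rightarrow> real) \<Rightarrow> (nat \<Rightarrow> real) \<Rightarrow> (nat \<Rightarrow> real) \<Rightarrow> (nat \<Rightarrow> real)
        \<Rightarrow> nat \<Rightarrow> real \<Rightarrow> real \<Rightarrow> nat \<Rightarrow> nat \<Rightarrow> nat \<Rightarrow> bool" where
  "SSprop P r0 g r U V C0 tau s0 rr N M p0 L0 k m =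
     (\<forall>x y :: 'd conf. length x = m \<and> length y = m \<and> separable r0 m (Lk L0 k) x y \<longrightarrow>
        oprob P {\<omega> \<in> space P. \<exists>E\<in>Ienergy N M.
            \<not> NS g r U V C0 tau s0 rr m (Lk L0 k) x E \<omega> \<and> \<not> NS g r U V C0 tau s0 rr m (Lk L0 k) y E \<omega>}
        < Lk L0 k powr (- 2 * pexp N p0 m))"

definition tunneling :: "real \<Rightarrow> real \<Rightarrow> real \<Rightarrow> ('d::finite site \<Rightarrow> 'd site \<Rightarrow> real)
        \<Rightarrow> ('d site \<Rightarrow> 'w \<Rightarrow> real) \<Rightarrow> (nat \<Rightarrow> real) \<Rightarrow> (nat \<Rightarrow> real) \<Rightarrow> (nat \<Rightarrow> real) \<Rightarrow> (nat \<Rightarrow> real)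
        \<Rightarrow> nat \<Rightarrow> real \<Rightarrow> nat \<Rightarrow> nat \<Rightarrow> nat \<Rightarrow> 'd conf \<Rightarrow> 'w \<Rightarrow> bool" where
  "tunneling r0 g r U V C0 tau s0 rr N M L0 k m u \<omega> =
     (\<exists>E\<in>Ienergy N M. \<exists>x y :: 'd conf. length x = m \<and> length y = m \<and>
        separable r0 m (Lk L0 k) x y \<and>
        cube m (Lk L0 k) x \<subseteq> cube m (Lk L0 (Suc k)) u \<and>
        cube m (Lk L0 k) y \<subseteq> cube m (Lk L0 (Suc k)) u \<and>
        \<not> NS g r U V C0 tau s0 rr m (Lk L0 k) x E \<omega> \<and> \<not> NS g r U V C0 tau s0 rr m (Lk L0 k) y E \<omega>)"

definition decomposes :: "real \<Rightarrow> nat \<Rightarrow> real \<Rightarrow> 'd::finite conf \<Rightarrow> nat set \<Rightarrow> bool" where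
  "decomposes r0 n L u J =
     (J \<noteq> {} \<and> J \<subset> {0..<n} \<and>
      proj J (cube n (L + r0) u) \<inter> proj ({0..<n} - J) (cube n (L + r0) u) = {})"

definition partially_tunneling :: "real \<Rightarrow> real \<Rightarrow> real \<Rightarrow> ('d::finite site \<Rightarrow> 'd site \<Rightarrow> real)
        \<Rightarrow> ('d site \<Rightarrow> 'w \<Rightarrow> real) \<Rightarrow> (nat \<Rightarrow> real) \<Rightarrow> (nat \<Rightarrow> real) \<Rightarrow> (nat \<Rightarrow> real) \<Rightarrow> (nat \<Rightarrow> real)
        \<Rightarrow> nat \<Rightarrow> real \<Rightarrow> nat \<Rightarrow> nat \<Rightarrow> nat \<Rightarrow> 'd conf \<Rightarrow> nat set \<Rightarrow> 'w \<Rightarrow> bool" where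
  "partially_tunneling r0 g r U V C0 tau s0 rr N M L0 k n u J \<omega> =
     (tunneling r0 g r U V C0 tau s0 rr N M L0 k (card J) (nths u J) \<omega>
      \<or> tunneling r0 g r U V C0 tau s0 rr N M L0 k (n - card J) (nths u ({0..<n} - J)) \<omega>)"

end

(* A partially tunneling cube contains, in one of its two factors (each with m < n particles),
   a pair of separable singular cubes of size L_k.  Their centres lie in that factor, a cube of
   radius L_{k+1} with at most (2 L_{k+1} + 1)^(md) points, so a union bound over the pairs of centres
   together with (SS.N.I.k.m) and L_k^(-2p) = L_{k+1}^(-p/2) gives the estimate.  Besides the
   decomposition J, only (SS) is used: the assumptions on the model enter through it alone. *)
theory Submission
  imports Defs
begin

lemma oprob_le_measure:
  assumes "B \<in> sets P" "A \<subseteq> B"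
  shows "oprob P A \<le> measure P B"
  unfolding oprob_def
  by (rule cInf_lower) (use assms in \<open>auto intro!: bdd_belowI[of _ 0]\<close>)

lemma oprob_mono:
  assumes "A \<subseteq> B" "B \<subseteq> space P"
  shows "oprob P A \<le> oprob P B"
  unfolding oprob_def
  by (rule cInf_superset_mono) (use assms in \<open>auto intro!: bdd_belowI[of _ 0]\<close>)

lemma oprob_empty: "oprob P {} = 0"
proof -
  have "oprob P {} \<le> 0"
    using oprob_le_measure[of "{}" P "{}"] by simp
  moreover have "0 \<le> oprob P {}"
    unfolding oprob_def by (rule cInf_greatest) auto
  ultimately show ?thesis by simp
qed

lemma oprob_le_1:
  assumes "prob_space P" "A \<subseteq> space P"
  shows "oprob P A \<le> 1"
  using oprob_le_measure[of "space P" P A] assms prob_space.prob_space by fastforce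

lemma oprob_approx:
  assumes "A \<subseteq> space P" "0 < e"
  obtains B where "B \<in> sets P" "A \<subseteq> B" "measure P B < oprob P A + e"
proof -
  have "{measure P B | B. B \<in> sets P \<and> A \<subseteq> B} \<noteq> {}"
    using assms(1) by auto
  moreover have "Inf {measure P B | B. B \<in> sets P \<and> A \<subseteq> B} < oprob P A + e"
    using assms(2) by (simp add: oprob_def)
  ultimately have "\<exists>x\<in>{measure P B | B. B \<in> sets P \<and> A \<subseteq> B}. x < oprob P A + e"
    by (rule cInf_lessD)
  with that show ?thesis
    by auto
qed

lemma oprob_Un_le:
  assumes "A \<subseteq> space P" "B \<subseteq> space P"
  shows "oprob P (A \<union> B) \<le> oprob P A + oprob P B"
proof (rule field_le_epsilon)
  fix e :: real assume "0 < e"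
  then have "0 < e / 2"
    by simp
  obtain A' where A': "A' \<in> sets P" "A \<subseteq> A'" "measure P A' < oprob P A + e / 2"
    using oprob_approx[OF assms(1) \<open>0 < e / 2\<close>] by blast
  obtain B' where B': "B' \<in> sets P" "B \<subseteq> B'" "measure P B' < oprob P B + e / 2"
    using oprob_approx[OF assms(2) \<open>0 < e / 2\<close>] by blast
  have "oprob P (A \<union> B) \<le> measure P (A' \<union> B')"
    using A' B' by (intro oprob_le_measure) auto
  also have "\<dots> \<le> measure P A' + measure P B'"
    using A' B' by (intro measure_Un_le)
  finally show "oprob P (A \<union> B) \<le> oprob P A + oprob P B + e"
    using A' B' by linarith
qed

lemma oprob_UN_le:
  assumes "finite I" "\<And>i. i \<in> I \<Longrightarrow> A i \<subseteq> space P"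
  shows "oprob P (\<Union>i\<in>I. A i) \<le> (\<Sum>i\<in>I. oprob P (A i))"
  using assms
proof (induction I rule: finite_induct)
  case empty
  then show ?case by (simp add: oprob_empty)
next
  case (insert i I)
  then have "oprob P (\<Union>j\<in>insert i I. A j) \<le> oprob P (A i) + oprob P (\<Union>j\<in>I. A j)"
    by (simp add: oprob_Un_le UN_least)
  with insert show ?case by simp
qed

lemma snorm_ball_subset:
  "{w :: 'd::finite site. snorm w \<le> L} \<subseteq> vec_lambda ` (PiE UNIV (\<lambda>_. {-\<lfloor>L\<rfloor>..\<lfloor>L\<rfloor>}))"
proof
  fix w :: "'d site" assume "w \<in> {w. snorm w \<le> L}"
  then have "(MAX i. \<bar>w $ i\<bar>) \<le> \<lfloor>L\<rfloor>"
    by (simp add: snorm_def le_floor_iff)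
  moreover have "\<bar>w $ i\<bar> \<le> (MAX i. \<bar>w $ i\<bar>)" for i
    by (rule Max_ge) auto
  ultimately have "\<bar>w $ i\<bar> \<le> \<lfloor>L\<rfloor>" for i
    by (meson order_trans)
  then have "(\<lambda>i. w $ i) \<in> PiE UNIV (\<lambda>_. {-\<lfloor>L\<rfloor>..\<lfloor>L\<rfloor>})"
    by (simp add: abs_le_iff minus_le_iff PiE_iff)
  then show "w \<in> vec_lambda ` PiE UNIV (\<lambda>_. {-\<lfloor>L\<rfloor>..\<lfloor>L\<rfloor>})"
    by (metis image_eqI vec_lambda_eta)
qed

lemma finite_snorm_ball: "finite {w :: 'd::finite site. snorm w \<le> L}"
  by (rule finite_subset[OF snorm_ball_subset]) (simp add: finite_PiE)

lemma card_snorm_ball_le: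
  assumes "0 \<le> L"
  shows "real (card {w :: 'd::finite site. snorm w \<le> L}) \<le> (2 * L + 1) ^ CARD('d)"
proof -
  let ?S = "PiE (UNIV :: 'd set) (\<lambda>_. {-\<lfloor>L\<rfloor>..\<lfloor>L\<rfloor>})"
  have "card {w :: 'd site. snorm w \<le> L} \<le> card (vec_lambda ` ?S)"
    by (rule card_mono[OF _ snorm_ball_subset]) (simp add: finite_PiE)
  also have "\<dots> \<le> card ?S"
    by (rule card_image_le) (simp add: finite_PiE)
  also have "\<dots> = nat (2 * \<lfloor>L\<rfloor> + 1) ^ CARD('d)"
    by (simp add: card_PiE)
  finally have "real (card {w :: 'd site. snorm w \<le> L}) \<le> real (nat (2 * \<lfloor>L\<rfloor> + 1)) ^ CARD('d)"
    by (metis of_nat_le_iff of_nat_power)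
  also have "\<dots> \<le> (2 * L + 1) ^ CARD('d)"
    using assms by (intro power_mono) linarith+
  finally show ?thesis .
qed

lemma cube_diff_inj:
  assumes "length v = m"
  shows "inj_on (\<lambda>x. cdiff x v) (cube m L v)"
proof (rule inj_onI)
  fix x y assume "x \<in> cube m L v" "y \<in> cube m L v" and eq: "cdiff x v = cdiff y v"
  then have "length x = m" "length y = m"
    by (auto simp: cube_def)
  show "x = y"
  proof (rule nth_equalityI)
    fix i assume "i < length x"
    then have "cdiff x v ! i = cdiff y v ! i"
      by (simp add: eq)
    with \<open>i < length x\<close> show "x ! i = y ! i"
      using assms \<open>length x = m\<close> \<open>length y = m\<close> by (simp add: cdiff_def)
  qed (simp add: \<open>length x = m\<close> \<open>length y = m\<close>)
qed

lemma cube_diff_image: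
  assumes "length v = m"
  shows "(\<lambda>x. cdiff x v) ` cube m L v \<subseteq> {z. set z \<subseteq> {w. snorm w \<le> L} \<and> length z = m}"
proof
  fix z assume "z \<in> (\<lambda>x. cdiff x v) ` cube m L v"
  then obtain x where x: "x \<in> cube m L v" and z: "z = cdiff x v"
    by blast
  have "snorm w \<le> L" if "w \<in> set z" for w
  proof -
    have "snorm w \<le> cnorm z"
      unfolding cnorm_def using that by (intro Max_ge) auto
    with x z show ?thesis
      by (simp add: cube_def)
  qed
  moreover have "length z = m"
    using x z assms by (simp add: cube_def cdiff_def)
  ultimately show "z \<in> {z. set z \<subseteq> {w. snorm w \<le> L} \<and> length z = m}"
    by auto
qed

lemma finite_cube:
  assumes "length v = m"
  shows "finite (cube m L v)"
  by (rule finite_imageD[OF finite_subset[OF cube_diff_image[OF assms]] cube_diff_inj[OF assms]])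
    (intro finite_lists_length_eq finite_snorm_ball)

lemma card_cube_le:
  fixes v :: "'d::finite conf"
  assumes "length v = m" "0 \<le> L"
  shows "real (card (cube m L v)) \<le> (2 * L + 1) ^ (CARD('d) * m)"
proof -
  have "card (cube m L v) \<le> card {z. set z \<subseteq> {w :: 'd site. snorm w \<le> L} \<and> length z = m}"
    using cube_diff_inj[OF assms(1)] cube_diff_image[OF assms(1)]
    by (intro card_inj_on_le finite_lists_length_eq finite_snorm_ball)
  also have "\<dots> = card {w :: 'd site. snorm w \<le> L} ^ m"
    by (intro card_lists_length_eq finite_snorm_ball)
  finally have "real (card (cube m L v)) \<le> real (card {w :: 'd site. snorm w \<le> L}) ^ m"
    by (metis of_nat_le_iff of_nat_power)
  also have "\<dots> \<le> ((2 * L + 1) ^ CARD('d)) ^ m"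
    using card_snorm_ball_le[OF assms(2)] by (intro power_mono) auto
  finally show ?thesis
    by (simp add: power_mult)
qed

lemma center_in_cube:
  assumes "length x = m" "0 \<le> L"
  shows "x \<in> cube m L x"
proof -
  have "set (map snorm (cdiff x x)) \<subseteq> {0}"
    by (auto simp: cdiff_def snorm_def set_zip)
  then have "insert 0 (set (map snorm (cdiff x x))) = {0}"
    by blast
  then have "cnorm (cdiff x x) = 0"
    unfolding cnorm_def by (metis Max_singleton)
  with assms show ?thesis
    by (simp add: cube_def)
qed

lemma Lk_nonneg: "0 \<le> Lk L0 k"
  by (simp add: Lk_def)

lemma Lk_Suc: "Lk L0 (Suc k) = Lk L0 k ^ 4"
  by (simp add: Lk_def power_mult[symmetric] mult.commute)

lemma Lk_Suc_cases:
  assumes "1 \<le> L0"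
  shows "Lk L0 (Suc k) = 1 \<or> 16 \<le> Lk L0 (Suc k)"
proof (cases "L0 = 1")
  case False
  with assms have "(2::real) ^ 4 \<le> real L0 ^ 4"
    by (intro power_mono) auto
  also have "\<dots> \<le> real L0 ^ 4 ^ Suc k"
    using False assms by (intro power_increasing) auto
  finally show ?thesis
    by (simp add: Lk_def)
qed (simp add: Lk_def)

lemma pexp_antimono:
  assumes "m \<le> m'" "0 \<le> p0"
  shows "pexp N p0 m' \<le> pexp N p0 m"
  unfolding pexp_def using assms by (intro mult_right_mono power_increasing) auto

lemma Lk_powr_pexp_le:
  assumes "1 \<le> L0" "m \<le> m'" "0 \<le> p0"
  shows "Lk L0 k powr (- 2 * pexp N p0 m) \<le> Lk L0 (Suc k) powr (- pexp N p0 m' / 2)"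
proof -
  have "0 < Lk L0 k"
    using assms(1) by (simp add: Lk_def)
  have "Lk L0 k powr (- 2 * pexp N p0 m) = (Lk L0 k powr 4) powr (- pexp N p0 m / 2)"
    by (simp add: powr_powr)
  also have "\<dots> = Lk L0 (Suc k) powr (- pexp N p0 m / 2)"
    using \<open>0 < Lk L0 k\<close> by (simp add: Lk_Suc)
  also have "\<dots> \<le> Lk L0 (Suc k) powr (- pexp N p0 m' / 2)"
    using assms pexp_antimono[of m m' p0 N] by (intro powr_mono) (auto simp: Lk_def)
  finally show ?thesis .
qed

lemma two_mult_pow_le_three_pow:
  fixes x :: real
  assumes "9 \<le> x" "2 \<le> e"
  shows "2 * (2 * x + 1) ^ e \<le> (3 * x) ^ e"
proof -
  obtain e' where e: "e = e' + 2"
    using assms(2) by (metis le_add_diff_inverse2)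
  have "9 * x \<le> x * x"
    using assms(1) by (intro mult_right_mono) auto
  moreover have "2 * (2 * x + 1) ^ 2 = 8 * (x * x) + 8 * x + 2" "(3 * x) ^ 2 = 9 * (x * x)"
    by (simp_all add: power2_eq_square algebra_simps)
  ultimately have "2 * (2 * x + 1) ^ 2 \<le> (3 * x) ^ 2"
    using assms(1) by linarith
  moreover have "(2 * x + 1) ^ e' \<le> (3 * x) ^ e'"
    using assms(1) by (intro power_mono) auto
  ultimately have "(2 * x + 1) ^ e' * (2 * (2 * x + 1) ^ 2) \<le> (3 * x) ^ e' * (3 * x) ^ 2"
    using assms(1) by (intro mult_mono) auto
  then show ?thesis
    by (simp only: e power_add mult.left_commute[of 2])
qed

lemma two_mult_pow_powr_le:
  fixes x a :: real
  assumes "9 \<le> x" "2 \<le> e"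
  shows "2 * ((2 * x + 1) ^ e * x powr a) \<le> 3 ^ e * x powr (a + real e)"
proof -
  have "2 * ((2 * x + 1) ^ e * x powr a) \<le> (3 * x) ^ e * x powr a"
    using two_mult_pow_le_three_pow[OF assms] by (simp add: mult.assoc[symmetric] mult_right_mono)
  also have "\<dots> = 3 ^ e * (x powr a * x powr real e)"
    using assms(1) by (simp add: power_mult_distrib powr_realpow)
  also have "\<dots> = 3 ^ e * x powr (a + real e)"
    by (simp only: powr_add)
  finally show ?thesis .
qed

lemma oprob_tunneling_le:
  fixes v :: "'d::finite conf"
  assumes SS: "SSprop P r0 g r U V C0 tau s0 rr N M p0 L0 k m" and v: "length v = m"
  shows "oprob P {\<omega> \<in> space P. tunneling r0 g r U V C0 tau s0 rr N M L0 k m v \<omega>}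
           \<le> (2 * Lk L0 (Suc k) + 1) ^ (2 * m * CARD('d)) * Lk L0 k powr (- 2 * pexp N p0 m)"
proof -
  let ?C = "cube m (Lk L0 (Suc k)) v" and ?\<epsilon> = "Lk L0 k powr (- 2 * pexp N p0 m)"
  define S where "S = {(x, y) \<in> ?C \<times> ?C. separable r0 m (Lk L0 k) x y}"
  define B where "B z = {\<omega> \<in> space P. \<exists>E\<in>Ienergy N M.
      \<not> NS g r U V C0 tau s0 rr m (Lk L0 k) (fst z) E \<omega> \<and> \<not> NS g r U V C0 tau s0 rr m (Lk L0 k) (snd z) E \<omega>}"
    for z
  have S_sub: "S \<subseteq> ?C \<times> ?C"
    by (auto simp: S_def)
  have finite_S: "finite S"
    using finite_subset[OF S_sub] finite_cube[OF v] by blast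
  have cover: "{\<omega> \<in> space P. tunneling r0 g r U V C0 tau s0 rr N M L0 k m v \<omega>} \<subseteq> (\<Union>z\<in>S. B z)"
  proof
    fix \<omega> assume "\<omega> \<in> {\<omega> \<in> space P. tunneling r0 g r U V C0 tau s0 rr N M L0 k m v \<omega>}"
    then obtain E x y where "\<omega> \<in> space P" "E \<in> Ienergy N M"
      and xy: "length x = m" "length y = m" "separable r0 m (Lk L0 k) x y"
        "cube m (Lk L0 k) x \<subseteq> ?C" "cube m (Lk L0 k) y \<subseteq> ?C"
      and "\<not> NS g r U V C0 tau s0 rr m (Lk L0 k) x E \<omega>" "\<not> NS g r U V C0 tau s0 rr m (Lk L0 k) y E \<omega>"
      unfolding tunneling_def by blast
    then have "\<omega> \<in> B (x, y)"
      unfolding B_def by auto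
    moreover have "(x, y) \<in> S"
      using xy center_in_cube[OF _ Lk_nonneg] unfolding S_def by blast
    ultimately show "\<omega> \<in> (\<Union>z\<in>S. B z)"
      by blast
  qed
  have B_bound: "oprob P (B z) \<le> ?\<epsilon>" if "z \<in> S" for z
  proof -
    from that have "length (fst z) = m \<and> length (snd z) = m \<and> separable r0 m (Lk L0 k) (fst z) (snd z)"
      by (auto simp: S_def cube_def)
    with SS have "oprob P (B z) < ?\<epsilon>"
      unfolding SSprop_def B_def by blast
    then show ?thesis
      by simp
  qed
  have "oprob P {\<omega> \<in> space P. tunneling r0 g r U V C0 tau s0 rr N M L0 k m v \<omega>}
      \<le> oprob P (\<Union>z\<in>S. B z)"
    by (rule oprob_mono[OF cover]) (auto simp: B_def)
  also have "\<dots> \<le> (\<Sum>z\<in>S. oprob P (B z))"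
    by (rule oprob_UN_le[OF finite_S]) (auto simp: B_def)
  also have "\<dots> \<le> (\<Sum>z\<in>S. ?\<epsilon>)"
    by (rule sum_mono) (rule B_bound)
  also have "\<dots> = real (card S) * ?\<epsilon>"
    by simp
  also have "\<dots> \<le> real (card ?C) ^ 2 * ?\<epsilon>"
  proof (rule mult_right_mono)
    have "card S \<le> card (?C \<times> ?C)"
      using S_sub finite_cube[OF v] by (intro card_mono) auto
    then show "real (card S) \<le> real (card ?C) ^ 2"
      by (metis card_cartesian_product of_nat_le_iff of_nat_power power2_eq_square)
  qed simp
  also have "\<dots> \<le> ((2 * Lk L0 (Suc k) + 1) ^ (CARD('d) * m)) ^ 2 * ?\<epsilon>"
    by (intro mult_right_mono power_mono card_cube_le[OF v Lk_nonneg]) auto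
  finally show ?thesis
    by (simp add: power_mult[symmetric] ac_simps)
qed

lemma decomposes_components:
  assumes "decomposes r0 n L u J" "length u = n"
  shows "1 \<le> card J" "card J \<le> n - 1"
    and "length (nths u J) = card J" "length (nths u ({0..<n} - J)) = n - card J"
proof -
  have J: "J \<noteq> {}" "J \<subset> {0..<n}"
    using assms(1) by (auto simp: decomposes_def)
  then have "finite J"
    by (meson finite_atLeastLessThan finite_subset psubset_imp_subset)
  with J show "1 \<le> card J" "card J \<le> n - 1"
    using psubset_card_mono[of "{0..<n}" J] by (auto simp: Suc_le_eq card_gt_0_iff)
  have "{i. i < length u \<and> i \<in> J} = J" "{i. i < length u \<and> i \<in> {0..<n} - J} = {0..<n} - J"
    using J assms(2) by auto
  with J \<open>finite J\<close> show "length (nths u J) = card J" "length (nths u ({0..<n} - J)) = n - card J"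
    by (simp_all add: length_nths card_Diff_subset)
qed

lemma oprob_partially_tunneling_le:
  fixes u :: "'d::finite conf"
  assumes SS: "\<forall>m. 1 \<le> m \<and> m \<le> n - 1 \<longrightarrow> SSprop P r0 g r U V C0 tau s0 rr N M p0 L0 k m"
    and u: "length u = n" and J: "decomposes r0 n (Lk L0 (Suc k)) u J"
    and L0: "1 \<le> L0" and p0: "0 \<le> p0"
  shows "oprob P {\<omega> \<in> space P. partially_tunneling r0 g r U V C0 tau s0 rr N M L0 k n u J \<omega>}
           \<le> 2 * ((2 * Lk L0 (Suc k) + 1) ^ (2 * (n - 1) * CARD('d))
                  * Lk L0 (Suc k) powr (- pexp N p0 (n - 1) / 2))"
    (is "_ \<le> 2 * ?bound")
proof -
  let ?L = "Lk L0 (Suc k)"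
  have tunneling: "oprob P {\<omega> \<in> space P. tunneling r0 g r U V C0 tau s0 rr N M L0 k m v \<omega>} \<le> ?bound"
    if "1 \<le> m" "m \<le> n - 1" "length v = m" for m and v :: "'d conf"
  proof -
    have "oprob P {\<omega> \<in> space P. tunneling r0 g r U V C0 tau s0 rr N M L0 k m v \<omega>}
        \<le> (2 * ?L + 1) ^ (2 * m * CARD('d)) * Lk L0 k powr (- 2 * pexp N p0 m)"
      using that by (intro oprob_tunneling_le) (auto simp: SS)
    also have "\<dots> \<le> ?bound"
      using that by (intro mult_mono power_increasing mult_le_mono Lk_powr_pexp_le L0 p0)
        (auto simp: Lk_nonneg)
    finally show ?thesis .
  qed
  let ?T1 = "{\<omega> \<in> space P. tunneling r0 g r U V C0 tau s0 rr N M L0 k (card J) (nths u J) \<omega>}"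
  let ?T2 = "{\<omega> \<in> space P. tunneling r0 g r U V C0 tau s0 rr N M L0 k (n - card J) (nths u ({0..<n} - J)) \<omega>}"
  have "{\<omega> \<in> space P. partially_tunneling r0 g r U V C0 tau s0 rr N M L0 k n u J \<omega>} = ?T1 \<union> ?T2"
    unfolding partially_tunneling_def by auto
  moreover have "oprob P ?T1 \<le> ?bound" "oprob P ?T2 \<le> ?bound"
    by (rule tunneling; use decomposes_components[OF J u] in auto)+
  ultimately show ?thesis
    using oprob_Un_le[of ?T1 P ?T2] by auto
qed

theorem lemma3p3:
  fixes P :: "'w measure" and V :: "(int^'d::finite) \<Rightarrow> 'w \<Rightarrow> real" and mu :: "real measure"
    and U :: "(int^'d) \<Rightarrow> (int^'d) \<Rightarrow> real"
    and N n k L0 :: nat and r g M M1 r0 rho p0 :: real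
    and C0 tau s0 rr :: "nat \<Rightarrow> real"
    and u :: "(int^'d) list" and J :: "nat set"
  assumes P: "prob_space P"
    and mu: "prob_space mu" "sets mu = sets borel"
    and supp: "measure mu {-M..M} = 1"
    and hoelder: "rho > 0" "\<exists>C. \<forall>a b. a \<le> b \<longrightarrow> measure mu {a..b} \<le> C * (b - a) powr rho"
    and iid: "prob_space.indep_vars P (\<lambda>_. borel) V UNIV" "\<forall>x. distr P borel (V x) = mu"
    and N: "N \<ge> 2" and r: "r > 0" and g: "g \<noteq> 0"
    and U: "\<forall>x y. U x y = U y x" "\<forall>x y. \<bar>U x y\<bar> \<le> M1" "\<forall>x y. snorm (x - y) \<ge> r0 \<longrightarrow> U x y = 0"
    and r0: "r0 \<ge> 1"
    and params: "\<forall>m. 1 \<le> m \<and> m \<le> N \<longrightarrow>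
                   C0 m > 0 \<and> tau m \<ge> 0 \<and> real m * CARD('d) / 2 < s0 m \<and> s0 m \<le> rr m
                   \<and> rr m < r - real m * CARD('d) / 2"
    and p0: "p0 \<ge> 20 * real N * CARD('d)"
    and L0: "L0 \<ge> 1"
    and n: "2 \<le> n" "n \<le> N"
    and SS: "\<forall>m. 1 \<le> m \<and> m \<le> n - 1 \<longrightarrow> SSprop P r0 g r U V C0 tau s0 rr N M p0 L0 k m"
    and u: "length u = n" "partially_interactive r0 n (Lk L0 (Suc k)) u"
    and J: "decomposes r0 n (Lk L0 (Suc k)) u J"
  shows "oprob P {\<omega> \<in> space P. partially_tunneling r0 g r U V C0 tau s0 rr N M L0 k n u J \<omega>}
           \<le> 3 ^ (2 * (n - 1) * CARD('d))
             * Lk L0 (Suc k) powr (- pexp N p0 (n - 1) / 2 + 2 * real (n - 1) * CARD('d))"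
proof -
  let ?L = "Lk L0 (Suc k)" and ?e = "2 * (n - 1) * CARD('d)" and ?q = "pexp N p0 (n - 1)"
  let ?PT = "{\<omega> \<in> space P. partially_tunneling r0 g r U V C0 tau s0 rr N M L0 k n u J \<omega>}"
  have "0 \<le> p0"
    by (rule order_trans[OF _ p0]) simp
  from Lk_Suc_cases[OF L0] show ?thesis
  proof
    assume "?L = 1"
    moreover have "oprob P ?PT \<le> 1"
      by (rule oprob_le_1[OF P]) auto
    ultimately show ?thesis
      by (simp add: order_trans[OF _ one_le_power])
  next
    assume "16 \<le> ?L"
    have "2 \<le> ?e"
      using n by (simp add: Suc_le_eq)
    have "oprob P ?PT \<le> 2 * ((2 * ?L + 1) ^ ?e * ?L powr (- ?q / 2))"
      by (rule oprob_partially_tunneling_le[OF SS u(1) J L0 \<open>0 \<le> p0\<close>])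
    also have "\<dots> \<le> 3 ^ ?e * ?L powr (- ?q / 2 + real ?e)"
      using \<open>16 \<le> ?L\<close> \<open>2 \<le> ?e\<close> by (intro two_mult_pow_powr_le) auto
    finally show ?thesis
      by simp
  qed
qed

end
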